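(* Let $m\in\mathbb{N}$ and let $H_m$ be the graph described in the context, with the geodesic-biased random walk with target $b$ and excited set $\mathcal{X}=\{a,s_1,\dots,s_m\}$. Writing $T(v_1,b)$ for the expected first hitting time of $b$ by this walk started at $v_1$, we have \[T(v_1,b)\ \ge\ \frac{\exp(\sqrt{m}/10)}{m^{3/2}+1}.\]
   Context: Geodesic-biased random walk: let $G$ be a finite connected graph, $b\in V(G)$ a target vertex and $\mathcal{X}\subseteq V(G)$ a set of excited vertices. For every vertex $x\neq b$ fix in advance one shortest path in $G$ from $x$ to $b$. From an unexcited vertex the walker moves to a uniformly random neighbour; from an excited vertex she moves to the next vertex on the fixed shortest path to $b$. The graph $H_m$ ($m\in\mathbb{N}$) has vertex set $\{a,b\}\cup\{v_1,\dots,v_m\}\cup\{s_1,\dots,s_m\}\cup\{r_{i,j}: i\in[m],\ j\in[2m+1]\}$ (so $2+m(2m+3)$ vertices) and edges: the path $a,v_1,v_2,\dots,v_m,b$; the path $a,s_1,s_2,\dots,s_m$; and for each $i\in[m]$ the path $s_i,r_{i,1},r_{i,2},\dots,r_{i,2m+1},v_i$ (of length $2m+2$). Its maximum degree is $3$. In $H_m$ the unique shortest path from $s_i$ to $b$ goes $s_i,s_{i-1},\dots,s_1,a,v_1,\dots,v_m,b$, so with these excitations the walker moves deterministically from $s_i$ to $s_{i-1}$ (from $s_1$ to $a$) and from $a$ to $v_1$. *)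

theory Defs
  imports "HOL-Analysis.Analysis"
begin

definition nbrs :: "('a \<times> 'a) set \<Rightarrow> 'a \<Rightarrow> 'a set" where
  "nbrs E x = {y. (x, y) \<in> E}"

definition gdist :: "('a \<times> 'a) set \<Rightarrow> 'a \<Rightarrow> 'a \<Rightarrow> nat" where
  "gdist E x y = (LEAST n. (x, y) \<in> E ^^ n)"

text \<open>One-step transition probability.  X is the set of excited vertices, nxt x is
  the next vertex on the fixed shortest path from x to the target.\<close>
definition trans_prob :: "('a \<times> 'a) set \<Rightarrow> 'a set \<Rightarrow> ('a \<Rightarrow> 'a) \<Rightarrow> 'a \<Rightarrow> 'a \<Rightarrow> real" where
  "trans_prob E X nxt x y =
     (if x \<in> X then (if y = nxt x then 1 else 0)
      else (if y \<in> nbrs E x then 1 / real (card (nbrs E x)) else 0))"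

text \<open>not_hit E X nxt b n x = probability that the walk started at x has not
  visited b at any of the times 0,...,n, i.e. P_x(tau_b > n).\<close>
fun not_hit :: "('a \<times> 'a) set \<Rightarrow> 'a set \<Rightarrow> ('a \<Rightarrow> 'a) \<Rightarrow> 'a \<Rightarrow> nat \<Rightarrow> 'a \<Rightarrow> real" where
  "not_hit E X nxt b 0 x = (if x = b then 0 else 1)"
| "not_hit E X nxt b (Suc n) x =
     (if x = b then 0 else (\<Sum>y\<in>nbrs E x. trans_prob E X nxt x y * not_hit E X nxt b n y))"

text \<open>Expected hitting time E_x[tau_b] = sum over n of P_x(tau_b > n).\<close>
definition hit_time :: "('a \<times> 'a) set \<Rightarrow> 'a set \<Rightarrow> ('a \<Rightarrow> 'a) \<Rightarrow> 'a \<Rightarrow> 'a \<Rightarrow> ennreal" where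
  "hit_time E X nxt b x = (\<Sum>n. ennreal (not_hit E X nxt b n x))"

datatype hv = Va | Vb | Vv nat | Vs nat | Vr nat nat

definition H_base :: "nat \<Rightarrow> (hv \<times> hv) set" where
  "H_base m =
     {(Va, Vv 1)} \<union> {(Vv i, Vv (i + 1)) | i. 1 \<le> i \<and> i < m} \<union> {(Vv m, Vb)}
   \<union> {(Va, Vs 1)} \<union> {(Vs i, Vs (i + 1)) | i. 1 \<le> i \<and> i < m}
   \<union> {(Vs i, Vr i 1) | i. 1 \<le> i \<and> i \<le> m}
   \<union> {(Vr i j, Vr i (j + 1)) | i j. 1 \<le> i \<and> i \<le> m \<and> 1 \<le> j \<and> j \<le> 2 * m}
   \<union> {(Vr i (2 * m + 1), Vv i) | i. 1 \<le> i \<and> i \<le> m}"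

definition H_edges :: "nat \<Rightarrow> (hv \<times> hv) set" where
  "H_edges m = H_base m \<union> (H_base m)\<inverse>"

definition H_exc :: "nat \<Rightarrow> hv set" where
  "H_exc m = {Va} \<union> {Vs i | i. 1 \<le> i \<and> i \<le> m}"

end

(* A function f that is bounded, nonpositive at b and satisfies f x <= 1 + (P f) x off b is a
   lower bound for the expected hitting time of b: by induction f x <= sum_(k<n) P_x(tau_b > k)
   + M P_x(tau_b > n), and the last term vanishes.

   In H_m the geodesic condition forces the excited steps a -> v_1 and s_i -> s_(i-1).  Put
   t = 1/sqrt(2m+2), q = 1 + t and the height g(v_i) = q^i, g(b) = q^(m+1), g = q on a and on
   the s_i, linear along each rung (reaching q^i at v_i because (2m+2) t^2 = 1).  Then
   f = 3/(q t) (q^(m+1) - g) is harmonic on the rungs, invariant under the excited steps, and at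
   v_i the average of g over the neighbours exceeds g(v_i) by at most q t / 3.  Hence
   E_(v_1) tau_b >= f(v_1) = 3 (q^m - 1) / t >= 3 q^(m-1) >= exp (sqrt m / 10). *)

theory Submission
  imports Defs
begin

lemma trans_prob_nonneg: "trans_prob E X nxt x y \<ge> 0"
  unfolding trans_prob_def by auto

lemma not_hit_nonneg: "not_hit E X nxt b n x \<ge> 0"
  by (induction n arbitrary: x) (simp_all add: sum_nonneg trans_prob_nonneg)

lemma not_hit_target [simp]: "not_hit E X nxt b n b = 0"
  by (cases n) auto

lemma trans_sum_excited:
  assumes "x \<in> X" "finite (nbrs E x)" "nxt x \<in> nbrs E x"
  shows "(\<Sum>y\<in>nbrs E x. trans_prob E X nxt x y * h y) = h (nxt x)"
proof -
  have "(\<Sum>y\<in>nbrs E x. trans_prob E X nxt x y * h y) = (\<Sum>y\<in>nbrs E x. if y = nxt x then h y else 0)"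
    by (rule sum.cong) (auto simp: trans_prob_def assms(1))
  also have "\<dots> = h (nxt x)"
    using assms(2,3) by simp
  finally show ?thesis .
qed

lemma trans_sum_unexcited:
  assumes "x \<notin> X"
  shows "(\<Sum>y\<in>nbrs E x. trans_prob E X nxt x y * h y) = (\<Sum>y\<in>nbrs E x. h y) / card (nbrs E x)"
  using assms by (simp add: trans_prob_def sum_divide_distrib)

lemma not_hit_Suc_sum:
  assumes "x \<noteq> b"
  shows "(\<Sum>k<Suc n. not_hit E X nxt b k x)
           = 1 + (\<Sum>y\<in>nbrs E x. trans_prob E X nxt x y * (\<Sum>k<n. not_hit E X nxt b k y))"
proof -
  have "(\<Sum>k<Suc n. not_hit E X nxt b k x) = 1 + (\<Sum>k<n. not_hit E X nxt b (Suc k) x)"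
    using assms by (simp only: sum.lessThan_Suc_shift) simp
  also have "(\<Sum>k<n. not_hit E X nxt b (Suc k) x)
      = (\<Sum>k<n. \<Sum>y\<in>nbrs E x. trans_prob E X nxt x y * not_hit E X nxt b k y)"
    using assms by simp
  also have "\<dots> = (\<Sum>y\<in>nbrs E x. trans_prob E X nxt x y * (\<Sum>k<n. not_hit E X nxt b k y))"
    by (simp add: sum.swap[of _ "{..<n}"] sum_distrib_left)
  finally show ?thesis .
qed

lemma supersolution_le_partial_hit_time:
  fixes f :: "'a \<Rightarrow> real"
  assumes closed: "\<And>x. x \<in> V \<Longrightarrow> nbrs E x \<subseteq> V"
    and bounded: "\<And>x. x \<in> V \<Longrightarrow> f x \<le> M" and target: "f b \<le> 0"
    and super: "\<And>x. x \<in> V \<Longrightarrow> x \<noteq> b \<Longrightarrow>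
                  f x \<le> 1 + (\<Sum>y\<in>nbrs E x. trans_prob E X nxt x y * f y)"
  shows "x \<in> V \<Longrightarrow> f x \<le> (\<Sum>k<n. not_hit E X nxt b k x) + M * not_hit E X nxt b n x"
proof (induction n arbitrary: x)
  case 0
  show ?case using bounded[OF 0] target by (cases "x = b") auto
next
  case (Suc n)
  show ?case
  proof (cases "x = b")
    case True
    then show ?thesis using target by simp
  next
    case False
    let ?P = "trans_prob E X nxt x"
    let ?S = "\<lambda>y. (\<Sum>k<n. not_hit E X nxt b k y) + M * not_hit E X nxt b n y"
    have "f y \<le> ?S y" if "y \<in> nbrs E x" for y
      using Suc.IH closed[OF Suc.prems] that by blast
    then have "1 + (\<Sum>y\<in>nbrs E x. ?P y * f y) \<le> 1 + (\<Sum>y\<in>nbrs E x. ?P y * ?S y)"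
      by (intro add_left_mono sum_mono mult_left_mono trans_prob_nonneg)
    also have "\<dots> = (1 + (\<Sum>y\<in>nbrs E x. ?P y * (\<Sum>k<n. not_hit E X nxt b k y)))
        + M * (\<Sum>y\<in>nbrs E x. ?P y * not_hit E X nxt b n y)"
      by (simp add: distrib_left sum.distrib sum_distrib_left mult.left_commute)
    also have "\<dots> = (\<Sum>k<Suc n. not_hit E X nxt b k x) + M * not_hit E X nxt b (Suc n) x"
      using False by (simp only: not_hit_Suc_sum[OF False]) simp
    finally show ?thesis
      using super[OF Suc.prems False] by linarith
  qed
qed

lemma supersolution_le_hit_time:
  fixes f :: "'a \<Rightarrow> real"
  assumes "\<And>x. x \<in> V \<Longrightarrow> nbrs E x \<subseteq> V"
    and "\<And>x. x \<in> V \<Longrightarrow> f x \<le> M" and "f b \<le> 0"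
    and "\<And>x. x \<in> V \<Longrightarrow> x \<noteq> b \<Longrightarrow>
           f x \<le> 1 + (\<Sum>y\<in>nbrs E x. trans_prob E X nxt x y * f y)"
    and "x \<in> V"
  shows "ennreal (f x) \<le> hit_time E X nxt b x"
proof (cases "hit_time E X nxt b x = top")
  case False
  let ?a = "\<lambda>n. not_hit E X nxt b n x"
  have summable: "summable ?a"
    using False not_hit_nonneg unfolding hit_time_def by (intro summable_suminf_not_top)
  have "(\<lambda>n. (\<Sum>k<n. ?a k) + M * ?a n) \<longlonglongrightarrow> suminf ?a + M * 0"
    by (intro tendsto_intros summable_LIMSEQ summable_LIMSEQ_zero summable)
  then have "f x \<le> suminf ?a"
    using supersolution_le_partial_hit_time[OF assms] by (simp add: LIMSEQ_le_const)
  moreover have "hit_time E X nxt b x = ennreal (suminf ?a)"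
    unfolding hit_time_def using not_hit_nonneg summable by (rule suminf_ennreal2)
  ultimately show ?thesis
    by (simp add: ennreal_leI)
qed simp

lemma gdist_le: "(x, y) \<in> E ^^ n \<Longrightarrow> gdist E x y \<le> n"
  unfolding gdist_def by (rule Least_le)

lemma gdist_relpow: "(x, y) \<in> E ^^ n \<Longrightarrow> (x, y) \<in> E ^^ gdist E x y"
  unfolding gdist_def by (rule LeastI)

lemma relpow_lipschitz:
  fixes h :: "'a \<Rightarrow> int"
  assumes lip: "\<forall>(u, v) \<in> E. h u \<le> h v + 1"
  shows "(x, y) \<in> E ^^ n \<Longrightarrow> h x \<le> h y + int n"
proof (induction n arbitrary: x)
  case 0
  then show ?case by simp
next
  case (Suc n)
  from Suc.prems obtain z where "(x, z) \<in> E" "(z, y) \<in> E ^^ n"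
    by (rule relpow_Suc_E2)
  with lip Suc.IH have "h x \<le> h z + 1" "h z \<le> h y + int n"
    by auto
  then show ?case by simp
qed

lemma geodesic_successor_bound:
  fixes h :: "'a \<Rightarrow> int"
  assumes lip: "\<forall>(u, v) \<in> E. h u \<le> h v + 1" and "sym E"
    and nbr: "y \<in> nbrs E x" and geodesic: "gdist E y b + 1 = gdist E x b"
    and path: "(x, b) \<in> E ^^ k"
  shows "h y + 1 \<le> h b + int k"
proof -
  have "(x, y) \<in> E"
    using nbr unfolding nbrs_def by simp
  with \<open>sym E\<close> have "(y, x) \<in> E"
    by (rule symD)
  then have "(y, b) \<in> E ^^ Suc k"
    using path by (rule relpow_Suc_I2)
  then have "h y \<le> h b + int (gdist E y b)"
    by (intro relpow_lipschitz[OF lip] gdist_relpow)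
  moreover have "gdist E y b + 1 \<le> k"
    using geodesic gdist_le[OF path] by simp
  ultimately show ?thesis
    by simp
qed

fun H_vertex :: "nat \<Rightarrow> hv \<Rightarrow> bool" where
  "H_vertex m Va = True"
| "H_vertex m Vb = True"
| "H_vertex m (Vv i) = (1 \<le> i \<and> i \<le> m)"
| "H_vertex m (Vs i) = (1 \<le> i \<and> i \<le> m)"
| "H_vertex m (Vr i j) = (1 \<le> i \<and> i \<le> m \<and> 1 \<le> j \<and> j \<le> 2 * m + 1)"

lemma H_vertex_nbrs: "1 \<le> m \<Longrightarrow> y \<in> nbrs (H_edges m) x \<Longrightarrow> H_vertex m y"
  unfolding nbrs_def H_edges_def H_base_def by auto

lemma nbrs_H_Va: "1 \<le> m \<Longrightarrow> nbrs (H_edges m) Va = {Vv 1, Vs 1}"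
  unfolding nbrs_def H_edges_def H_base_def by auto

lemma nbrs_H_Vv:
  "1 \<le> i \<Longrightarrow> i \<le> m \<Longrightarrow> nbrs (H_edges m) (Vv i) =
     {if i = 1 then Va else Vv (i - 1), if i = m then Vb else Vv (i + 1), Vr i (2 * m + 1)}"
  unfolding nbrs_def H_edges_def H_base_def by auto

lemma nbrs_H_Vs:
  "1 \<le> i \<Longrightarrow> i \<le> m \<Longrightarrow> nbrs (H_edges m) (Vs i) =
     {if i = 1 then Va else Vs (i - 1), Vr i 1} \<union> (if i < m then {Vs (i + 1)} else {})"
  unfolding nbrs_def H_edges_def H_base_def by auto

lemma nbrs_H_Vr:
  "1 \<le> i \<Longrightarrow> i \<le> m \<Longrightarrow> 1 \<le> j \<Longrightarrow> j \<le> 2 * m + 1 \<Longrightarrow> nbrs (H_edges m) (Vr i j) =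
     {if j = 1 then Vs i else Vr i (j - 1), if j = 2 * m + 1 then Vv i else Vr i (j + 1)}"
  unfolding nbrs_def H_edges_def H_base_def by auto

lemma sym_H_edges: "sym (H_edges m)"
  unfolding H_edges_def by (rule sym_Un_converse)

text \<open>The graph distance to b in H_m; a rung is left through its nearer end.\<close>
fun H_depth :: "nat \<Rightarrow> hv \<Rightarrow> int" where
  "H_depth m Va = m + 1"
| "H_depth m Vb = 0"
| "H_depth m (Vv i) = m + 1 - i"
| "H_depth m (Vs i) = m + 1 + i"
| "H_depth m (Vr i j) = min (m + 1 + i + j) (3 * m + 3 - i - j)"

lemma H_depth_lipschitz: "\<forall>(u, v) \<in> H_edges m. H_depth m u \<le> H_depth m v + 1"
  unfolding H_edges_def H_base_def by auto

lemma H_path_Va_Vb: "1 \<le> m \<Longrightarrow> (Va, Vb) \<in> H_edges m ^^ (m + 1)"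
  unfolding relpow_fun_conv
  by (rule exI[of _ "\<lambda>k. if k = 0 then Va else if k \<le> m then Vv k else Vb"])
    (auto simp: H_edges_def H_base_def)

lemma H_path_Vs_Va: "1 \<le> i \<Longrightarrow> i \<le> m \<Longrightarrow> (Vs i, Va) \<in> H_edges m ^^ i"
  unfolding relpow_fun_conv
  by (rule exI[of _ "\<lambda>k. if k < i then Vs (i - k) else Va"])
    (auto simp: H_edges_def H_base_def)

lemma H_geodesic_next_Va:
  assumes "1 \<le> m" and "nxt Va \<in> nbrs (H_edges m) Va"
    and "gdist (H_edges m) (nxt Va) Vb + 1 = gdist (H_edges m) Va Vb"
  shows "nxt Va = Vv 1"
proof -
  have "H_depth m (nxt Va) + 1 \<le> H_depth m Vb + int (m + 1)"
    by (rule geodesic_successor_bound[OF H_depth_lipschitz sym_H_edges assms(2,3) H_path_Va_Vb[OF assms(1)]])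
  moreover have "nxt Va \<in> {Vv 1, Vs 1}"
    using assms(2) nbrs_H_Va[OF assms(1)] by simp
  ultimately show ?thesis
    by auto
qed

lemma H_geodesic_next_Vs:
  assumes "1 \<le> i" "i \<le> m" and "nxt (Vs i) \<in> nbrs (H_edges m) (Vs i)"
    and "gdist (H_edges m) (nxt (Vs i)) Vb + 1 = gdist (H_edges m) (Vs i) Vb"
  shows "nxt (Vs i) = (if i = 1 then Va else Vs (i - 1))"
proof -
  have "(Vs i, Vb) \<in> H_edges m ^^ i O H_edges m ^^ (m + 1)"
    using H_path_Vs_Va[OF assms(1,2)] H_path_Va_Vb assms(1,2) by (intro relcompI) auto
  then have "(Vs i, Vb) \<in> H_edges m ^^ (i + (m + 1))"
    by (simp only: relpow_add)
  then have "H_depth m (nxt (Vs i)) + 1 \<le> H_depth m Vb + int (i + (m + 1))"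
    by (rule geodesic_successor_bound[OF H_depth_lipschitz sym_H_edges assms(3,4)])
  moreover have "nxt (Vs i) \<in> {if i = 1 then Va else Vs (i - 1), Vr i 1, Vs (i + 1)}"
    using assms(3) nbrs_H_Vs[OF assms(1,2)] by (auto split: if_splits)
  ultimately show ?thesis
    using assms(2) by auto
qed

definition H_eps :: "nat \<Rightarrow> real" where
  "H_eps m = 1 / sqrt (2 * real m + 2)"

definition H_ratio :: "nat \<Rightarrow> real" where
  "H_ratio m = 1 + H_eps m"

lemma H_eps_pos: "0 < H_eps m"
  unfolding H_eps_def by simp

lemma H_eps_square: "(2 * real m + 2) * H_eps m ^ 2 = 1"
  unfolding H_eps_def by (simp add: power_divide)

lemma H_eps_le_half: "1 \<le> m \<Longrightarrow> H_eps m \<le> 1 / 2"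
  unfolding H_eps_def by (simp add: real_le_rsqrt divide_simps)

lemma H_eps_ge: "1 \<le> m \<Longrightarrow> 1 / (2 * sqrt (real m)) \<le> H_eps m"
proof -
  assume "1 \<le> m"
  then have "sqrt (2 * real m + 2) \<le> sqrt (4 * real m)"
    by simp
  also have "\<dots> = 2 * sqrt (real m)"
    by (simp add: real_sqrt_mult)
  finally show ?thesis
    unfolding H_eps_def using \<open>1 \<le> m\<close> by (intro divide_left_mono) auto
qed

lemma H_ratio_ge_1: "1 \<le> H_ratio m"
  unfolding H_ratio_def using H_eps_pos[of m] by simp

lemma exp_le_H_ratio_power:
  assumes "1 \<le> m"
  shows "exp (sqrt (real m) / 10) \<le> 3 * H_ratio m ^ (m - 1)"
proof -
  define t where "t = H_eps m"
  define r where "r = sqrt (real m)"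
  have t: "0 < t" "t \<le> 1 / 2" "1 / (2 * r) \<le> t"
    unfolding t_def r_def using H_eps_pos H_eps_le_half H_eps_ge assms by auto
  have r: "1 \<le> r" "r * r = real m"
    unfolding r_def using assms by auto
  have "t / 2 \<le> t - t^2"
    using t by (simp add: power2_eq_square)
  also have "\<dots> \<le> ln (1 + t)"
    using t by (intro ln_one_plus_pos_lower_bound) auto
  finally have "exp (t / 2) \<le> exp (ln (1 + t))"
    by simp
  then have "exp (t / 2) \<le> H_ratio m"
    unfolding H_ratio_def t_def[symmetric] using t by simp
  then have exp_le_power: "exp (real (m - 1) * (t / 2)) \<le> H_ratio m ^ (m - 1)"
    unfolding exp_of_nat_mult by (intro power_mono) auto
  have "r / 2 - 1 / 2 \<le> r / 2 - 1 / (2 * r)"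
    using r by (simp add: field_simps)
  also have "\<dots> = real (m - 1) * (1 / (2 * r))"
    using r assms by (simp add: of_nat_diff field_simps)
  also have "\<dots> \<le> real (m - 1) * t"
    using t by (intro mult_left_mono) auto
  finally have "r / 10 \<le> 1 + real (m - 1) * (t / 2)"
    using r by linarith
  then have "exp (r / 10) \<le> exp 1 * exp (real (m - 1) * (t / 2))"
    by (simp flip: exp_add)
  also have "\<dots> \<le> 3 * H_ratio m ^ (m - 1)"
    using exp_le exp_le_power by (intro mult_mono) auto
  finally show ?thesis
    unfolding r_def .
qed

definition H_rung :: "nat \<Rightarrow> nat \<Rightarrow> nat \<Rightarrow> real" where
  "H_rung m i j = H_ratio m + real j * H_eps m ^ 2 * (H_ratio m ^ i - H_ratio m)"

lemma H_rung_0 [simp]: "H_rung m i 0 = H_ratio m"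
  unfolding H_rung_def by simp

lemma H_rung_end: "H_rung m i (2 * m + 2) = H_ratio m ^ i"
proof -
  have "real (2 * m + 2) * H_eps m ^ 2 = 1"
    using H_eps_square[of m] by (simp add: add.commute)
  then show ?thesis
    unfolding H_rung_def by (simp add: algebra_simps)
qed

lemma H_rung_midpoint: "1 \<le> j \<Longrightarrow> H_rung m i j = (H_rung m i (j - 1) + H_rung m i (j + 1)) / 2"
  unfolding H_rung_def by (simp add: of_nat_diff algebra_simps)

fun H_height :: "nat \<Rightarrow> hv \<Rightarrow> real" where
  "H_height m Va = H_ratio m"
| "H_height m Vb = H_ratio m ^ (m + 1)"
| "H_height m (Vv i) = H_ratio m ^ i"
| "H_height m (Vs i) = H_ratio m"
| "H_height m (Vr i j) = H_rung m i j"

lemma H_height_nonneg: "H_vertex m x \<Longrightarrow> 0 \<le> H_height m x"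
proof (cases x)
  case (Vr i j)
  assume "H_vertex m x"
  then have "H_ratio m ^ 1 \<le> H_ratio m ^ i"
    using Vr H_ratio_ge_1 by (intro power_increasing) auto
  then show ?thesis
    using Vr H_ratio_ge_1[of m] by (simp add: H_rung_def)
qed (use H_ratio_ge_1[of m] in auto)

lemma H_height_Vv_excess:
  assumes "1 \<le> m" "1 \<le> i" "i \<le> m"
  shows "H_height m (if i = 1 then Va else Vv (i - 1)) + H_height m (if i = m then Vb else Vv (i + 1))
           + H_height m (Vr i (2 * m + 1)) - 3 * H_height m (Vv i) \<le> H_ratio m * H_eps m"
proof -
  define t where "t = H_eps m"
  define q where "q = H_ratio m"
  have q: "q = 1 + t"
    unfolding q_def t_def H_ratio_def ..
  have t: "0 < t" "t \<le> 1"
    unfolding t_def using H_eps_pos H_eps_le_half[OF assms(1)] by auto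
  have "real (2 * m + 1) * t^2 = 1 - t^2"
    using H_eps_square[of m] unfolding t_def by (simp add: algebra_simps)
  then have rung: "H_height m (Vr i (2 * m + 1)) = q + (1 - t^2) * (q ^ i - q)"
    unfolding H_height.simps H_rung_def q_def[symmetric] t_def[symmetric] by simp
  have right: "H_height m (if i = m then Vb else Vv (i + 1)) = q ^ (i + 1)"
    unfolding q_def by simp
  have centre: "H_height m (Vv i) = q ^ i"
    unfolding q_def by simp
  show ?thesis
  proof (cases "i = 1")
    case True
    then show ?thesis
      unfolding rung right centre using q by (simp add: q_def[symmetric] t_def[symmetric] algebra_simps power2_eq_square)
  next
    case False
    define p where "p = q ^ (i - 1)"
    have left: "H_height m (if i = 1 then Va else Vv (i - 1)) = p"
      unfolding p_def q_def using False by simp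
    have powers: "q ^ i = p * q" "q ^ (i + 1) = p * q^2"
      unfolding p_def using assms(2) by (simp_all flip: power_Suc2 power_add)
    have "p + p * q^2 + (q + (1 - t^2) * (p * q - q)) - 3 * (p * q) = t^2 * (q - p * t)"
      using q by (simp add: algebra_simps power2_eq_square)
    also have "\<dots> \<le> t^2 * q"
      unfolding p_def using q t by (intro mult_left_mono) auto
    also have "\<dots> \<le> q * t"
      using q t by (simp add: power2_eq_square)
    finally show ?thesis
      unfolding left right rung centre powers unfolding q_def t_def .
  qed
qed

definition H_scale :: "nat \<Rightarrow> real" where
  "H_scale m = 3 / (H_ratio m * H_eps m)"

definition H_potential :: "nat \<Rightarrow> hv \<Rightarrow> real" where
  "H_potential m x = H_scale m * (H_ratio m ^ (m + 1) - H_height m x)"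

lemma H_scale_pos: "0 < H_scale m"
  unfolding H_scale_def using H_ratio_ge_1[of m] H_eps_pos[of m] by simp

lemma H_potential_le:
  assumes "H_vertex m x"
  shows "H_potential m x \<le> H_scale m * H_ratio m ^ (m + 1)"
  unfolding H_potential_def
  by (intro mult_left_mono less_imp_le[OF H_scale_pos]) (use H_height_nonneg[OF assms] in simp)

lemma H_potential_unexcited_sum:
  assumes "x \<notin> H_exc m" and "finite (nbrs (H_edges m) x)" and "nbrs (H_edges m) x \<noteq> {}"
  shows "(\<Sum>y\<in>nbrs (H_edges m) x. trans_prob (H_edges m) (H_exc m) nxt x y * H_potential m y)
           = H_scale m * (H_ratio m ^ (m + 1)
               - (\<Sum>y\<in>nbrs (H_edges m) x. H_height m y) / card (nbrs (H_edges m) x))"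
    (is "_ = ?C * (?Q - ?H / ?n)")
proof -
  have "0 < ?n"
    using assms(2,3) by (simp add: card_gt_0_iff)
  have "(\<Sum>y\<in>nbrs (H_edges m) x. trans_prob (H_edges m) (H_exc m) nxt x y * H_potential m y)
      = (\<Sum>y\<in>nbrs (H_edges m) x. H_potential m y) / ?n"
    using assms(1) by (rule trans_sum_unexcited)
  also have "(\<Sum>y\<in>nbrs (H_edges m) x. H_potential m y) = ?C * (?n * ?Q - ?H)"
    unfolding H_potential_def sum_distrib_left[symmetric] by (simp add: sum_subtractf)
  finally show ?thesis
    using \<open>0 < ?n\<close> by (simp add: field_simps)
qed

lemma le_one_plus_affine:
  fixes c h s Q :: real
  assumes "c * (s - h) \<le> 1"
  shows "c * (Q - h) \<le> 1 + c * (Q - s)"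
  using assms by (simp add: algebra_simps)

lemma H_potential_super_Vv:
  assumes "1 \<le> m" "1 \<le> i" "i \<le> m"
  shows "H_potential m (Vv i)
           \<le> 1 + (\<Sum>y\<in>nbrs (H_edges m) (Vv i). trans_prob (H_edges m) (H_exc m) nxt (Vv i) y * H_potential m y)"
proof -
  define A where "A = (if i = 1 then Va else Vv (i - 1))"
  define B where "B = (if i = m then Vb else Vv (i + 1))"
  define R where "R = Vr i (2 * m + 1)"
  have nbrs: "nbrs (H_edges m) (Vv i) = {A, B, R}" and "A \<noteq> B" "A \<noteq> R" "B \<noteq> R"
    using nbrs_H_Vv[OF assms(2,3)] unfolding A_def B_def R_def by auto
  have "Vv i \<notin> H_exc m"
    by (simp add: H_exc_def)
  then have "(\<Sum>y\<in>nbrs (H_edges m) (Vv i). trans_prob (H_edges m) (H_exc m) nxt (Vv i) y * H_potential m y)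
      = H_scale m * (H_ratio m ^ (m + 1)
          - (\<Sum>y\<in>nbrs (H_edges m) (Vv i). H_height m y) / card (nbrs (H_edges m) (Vv i)))"
    by (rule H_potential_unexcited_sum) (simp_all add: nbrs)
  also have "(\<Sum>y\<in>nbrs (H_edges m) (Vv i). H_height m y) / card (nbrs (H_edges m) (Vv i))
      = (H_height m A + H_height m B + H_height m R) / 3"
    using nbrs \<open>A \<noteq> B\<close> \<open>A \<noteq> R\<close> \<open>B \<noteq> R\<close> by simp
  finally have sum: "(\<Sum>y\<in>nbrs (H_edges m) (Vv i). trans_prob (H_edges m) (H_exc m) nxt (Vv i) y * H_potential m y)
      = H_scale m * (H_ratio m ^ (m + 1) - (H_height m A + H_height m B + H_height m R) / 3)" .
  have "H_height m A + H_height m B + H_height m R - 3 * H_height m (Vv i) \<le> H_ratio m * H_eps m"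
    using H_height_Vv_excess[OF assms] unfolding A_def B_def R_def .
  then have "H_scale m * ((H_height m A + H_height m B + H_height m R) / 3 - H_height m (Vv i)) \<le> 1"
    unfolding H_scale_def using H_ratio_ge_1[of m] H_eps_pos[of m] by (simp add: field_simps)
  then show ?thesis
    unfolding sum unfolding H_potential_def by (rule le_one_plus_affine)
qed

lemma H_potential_harmonic_Vr:
  assumes "1 \<le> i" "i \<le> m" "1 \<le> j" "j \<le> 2 * m + 1"
  shows "H_potential m (Vr i j)
           = (\<Sum>y\<in>nbrs (H_edges m) (Vr i j). trans_prob (H_edges m) (H_exc m) nxt (Vr i j) y * H_potential m y)"
proof -
  define L where "L = (if j = 1 then Vs i else Vr i (j - 1))"
  define R where "R = (if j = 2 * m + 1 then Vv i else Vr i (j + 1))"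
  have nbrs: "nbrs (H_edges m) (Vr i j) = {L, R}" and "L \<noteq> R"
    using nbrs_H_Vr[OF assms] unfolding L_def R_def by auto
  have "H_height m L = H_rung m i (j - 1)"
    unfolding L_def by simp
  moreover have "H_height m R = H_rung m i (j + 1)"
    unfolding R_def using H_rung_end[of m i] by simp
  ultimately have midpoint: "H_height m (Vr i j)
      = (\<Sum>y\<in>nbrs (H_edges m) (Vr i j). H_height m y) / card (nbrs (H_edges m) (Vr i j))"
    using H_rung_midpoint[OF assms(3)] nbrs \<open>L \<noteq> R\<close> by simp
  have "Vr i j \<notin> H_exc m"
    by (simp add: H_exc_def)
  then have "(\<Sum>y\<in>nbrs (H_edges m) (Vr i j). trans_prob (H_edges m) (H_exc m) nxt (Vr i j) y * H_potential m y)
      = H_scale m * (H_ratio m ^ (m + 1)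
          - (\<Sum>y\<in>nbrs (H_edges m) (Vr i j). H_height m y) / card (nbrs (H_edges m) (Vr i j)))"
    by (rule H_potential_unexcited_sum) (simp_all add: nbrs)
  then show ?thesis
    unfolding midpoint[symmetric] H_potential_def by (rule sym)
qed

lemma H_potential_supersolution:
  assumes "1 \<le> m" and nxt_Va: "nxt Va = Vv 1"
    and nxt_Vs: "\<And>i. 1 \<le> i \<Longrightarrow> i \<le> m \<Longrightarrow> nxt (Vs i) = (if i = 1 then Va else Vs (i - 1))"
    and "H_vertex m x" and "x \<noteq> Vb"
  shows "H_potential m x
           \<le> 1 + (\<Sum>y\<in>nbrs (H_edges m) x. trans_prob (H_edges m) (H_exc m) nxt x y * H_potential m y)"
proof (cases x)
  case Va
  have "(\<Sum>y\<in>nbrs (H_edges m) Va. trans_prob (H_edges m) (H_exc m) nxt Va y * H_potential m y)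
      = H_potential m (nxt Va)"
    using nxt_Va nbrs_H_Va[OF assms(1)] by (intro trans_sum_excited) (auto simp: H_exc_def)
  then show ?thesis
    using Va nxt_Va by (simp add: H_potential_def)
next
  case (Vs i)
  then have i: "1 \<le> i" "i \<le> m"
    using assms(4) by auto
  have "(\<Sum>y\<in>nbrs (H_edges m) (Vs i). trans_prob (H_edges m) (H_exc m) nxt (Vs i) y * H_potential m y)
      = H_potential m (nxt (Vs i))"
    using nxt_Vs[OF i] nbrs_H_Vs[OF i] i by (intro trans_sum_excited) (auto simp: H_exc_def)
  then show ?thesis
    using Vs nxt_Vs[OF i] by (simp add: H_potential_def)
next
  case (Vv i)
  then show ?thesis
    using assms(1,4) H_potential_super_Vv by simp
next
  case (Vr i j)
  then show ?thesis
    using assms(4) H_potential_harmonic_Vr by simp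
qed (use assms(5) in simp)

lemma H_potential_Vv1_lower:
  assumes "1 \<le> m"
  shows "exp (sqrt (real m) / 10) / (real m powr (3 / 2) + 1) \<le> H_potential m (Vv 1)"
proof -
  define t where "t = H_eps m"
  define p where "p = H_ratio m ^ (m - 1)"
  have t: "0 < t" and p: "1 \<le> p"
    unfolding t_def p_def using H_eps_pos H_ratio_ge_1 by auto
  have "H_ratio m ^ (m + 1) = p * H_ratio m ^ 2"
    unfolding p_def using assms by (simp flip: power_add)
  then have "H_potential m (Vv 1) = 3 / (H_ratio m * t) * (p * H_ratio m ^ 2 - H_ratio m)"
    unfolding H_potential_def H_scale_def t_def by simp
  also have "\<dots> = 3 * (p * H_ratio m - 1) / t"
    using t H_ratio_ge_1[of m] by (simp add: field_simps power2_eq_square)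
  also have "\<dots> = 3 * (p * (1 + t) - 1) / t"
    unfolding H_ratio_def t_def ..
  also have "\<dots> \<ge> 3 * p"
    using t p by (simp add: field_simps)
  finally have "3 * p \<le> H_potential m (Vv 1)" .
  moreover have "exp (sqrt (real m) / 10) / (real m powr (3 / 2) + 1) \<le> exp (sqrt (real m) / 10) / 1"
    by (intro divide_left_mono) (auto intro: add_nonneg_pos)
  ultimately show ?thesis
    using exp_le_H_ratio_power[OF assms, folded p_def] by simp
qed

theorem mainTheorem4:
  fixes m :: nat and nxt :: "hv \<Rightarrow> hv"
  assumes "m \<ge> 1"
    and "\<forall>x\<in>H_exc m. nxt x \<in> nbrs (H_edges m) x \<and>
           gdist (H_edges m) (nxt x) Vb + 1 = gdist (H_edges m) x Vb"
  shows "hit_time (H_edges m) (H_exc m) nxt Vb (Vv 1)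
           \<ge> ennreal (exp (sqrt (real m) / 10) / (real m powr (3/2) + 1))"
proof -
  have nxt_Va: "nxt Va = Vv 1"
    using assms by (intro H_geodesic_next_Va) (auto simp: H_exc_def)
  have nxt_Vs: "nxt (Vs i) = (if i = 1 then Va else Vs (i - 1))" if "1 \<le> i" "i \<le> m" for i
    using assms that by (intro H_geodesic_next_Vs) (auto simp: H_exc_def)
  have "ennreal (H_potential m (Vv 1)) \<le> hit_time (H_edges m) (H_exc m) nxt Vb (Vv 1)"
  proof (rule supersolution_le_hit_time[where V = "Collect (H_vertex m)"])
    show "H_potential m Vb \<le> 0"
      by (simp add: H_potential_def)
  qed (use assms(1) H_vertex_nbrs H_potential_le H_potential_supersolution[OF assms(1) nxt_Va nxt_Vs] in auto)
  then show ?thesis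
    using H_potential_Vv1_lower[OF assms(1)] by (meson ennreal_leI order_trans)
qed

end
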